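(* Let $G=(V,E)$ be any finite connected graph. Then for all $n \ge 2$ there exists a 1-resilient asynchronous algorithm for $n$ processes communicating through single-writer atomic snapshot objects (equivalently, read/write registers) that solves graphical approximate agreement on $G$.
   Context: Graphical approximate agreement on $G$ (known to all processes): each process $p_i$ receives an input vertex $x_i\in V$ and each non-crashed process outputs $y_i\in V$ such that any two outputs are equal or adjacent in $G$ and every output lies on a shortest path in $G$ between two (not necessarily distinct) inputs. An algorithm is 1-resilient if, in every execution in which at most one process crashes, every non-crashed process eventually outputs and the outputs satisfy the specification. *)

theory Defs
  imports Main
begin

definition finite_graph :: "'v set \<Rightarrow> ('v \<Rightarrow> 'v \<Rightarrow> bool) \<Rightarrow> bool" where
  "finite_graph V E \<longleftrightarrow> finite V \<and> (\<forall>u v. E u v \<longrightarrow> u \<in> V \<and> v \<in> V)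
     \<and> (\<forall>u v. E u v \<longrightarrow> E v u) \<and> (\<forall>u. \<not> E u u)"

definition walk :: "'v set \<Rightarrow> ('v \<Rightarrow> 'v \<Rightarrow> bool) \<Rightarrow> 'v list \<Rightarrow> bool" where
  "walk V E p \<longleftrightarrow> p \<noteq> [] \<and> set p \<subseteq> V \<and> successively E p"

definition connected_graph :: "'v set \<Rightarrow> ('v \<Rightarrow> 'v \<Rightarrow> bool) \<Rightarrow> bool" where
  "connected_graph V E \<longleftrightarrow> V \<noteq> {} \<and>
     (\<forall>u\<in>V. \<forall>v\<in>V. \<exists>p. walk V E p \<and> hd p = u \<and> last p = v)"

definition gdist :: "'v set \<Rightarrow> ('v \<Rightarrow> 'v \<Rightarrow> bool) \<Rightarrow> 'v \<Rightarrow> 'v \<Rightarrow> nat" where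
  "gdist V E u v = (LEAST k. \<exists>p. walk V E p \<and> hd p = u \<and> last p = v \<and> length p = Suc k)"

definition on_shortest_path :: "'v set \<Rightarrow> ('v \<Rightarrow> 'v \<Rightarrow> bool) \<Rightarrow> 'v \<Rightarrow> 'v \<Rightarrow> 'v \<Rightarrow> bool" where
  "on_shortest_path V E u v w \<longleftrightarrow>
     (\<exists>p. walk V E p \<and> hd p = u \<and> last p = v \<and> length p = Suc (gdist V E u v) \<and> w \<in> set p)"

text \<open>Processes are 0..<n. Process i owns component i of the snapshot object.
A step of process i is determined by its local state: either an atomic
update of its own component (with a new local state), or an atomic scan of
the whole object (the new local state is a function of the scanned view).
Unwritten components hold None.\<close>

datatype ('s, 'r) op = Update 'r 's | Scan "(nat \<Rightarrow> 'r option) \<Rightarrow> 's"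

record ('s, 'r, 'v) alg =
  alg_init :: "nat \<Rightarrow> 'v \<Rightarrow> 's"
  alg_act  :: "nat \<Rightarrow> 's \<Rightarrow> ('s, 'r) op"
  alg_out  :: "nat \<Rightarrow> 's \<Rightarrow> 'v option"

type_synonym ('s, 'r) config = "(nat \<Rightarrow> 's) \<times> (nat \<Rightarrow> 'r option)"

fun step :: "('s, 'r, 'v) alg \<Rightarrow> nat \<Rightarrow> ('s, 'r) config \<Rightarrow> ('s, 'r) config" where
  "step A i (L, M) =
     (case alg_act A i (L i) of
        Update r s' \<Rightarrow> (L(i := s'), M(i := Some r))
      | Scan f \<Rightarrow> (L(i := f M), M))"

text \<open>Execution determined by inputs x and a schedule sigma (sigma t is the
process taking step t).\<close>
primrec exec :: "('s, 'r, 'v) alg \<Rightarrow> (nat \<Rightarrow> 'v) \<Rightarrow> (nat \<Rightarrow> nat) \<Rightarrow> nat \<Rightarrow> ('s, 'r) config" where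
  "exec A x \<sigma> 0 = ((\<lambda>i. alg_init A i (x i)), (\<lambda>_. None))"
| "exec A x \<sigma> (Suc t) = step A (\<sigma> t) (exec A x \<sigma> t)"

definition out_at :: "('s, 'r, 'v) alg \<Rightarrow> (nat \<Rightarrow> 'v) \<Rightarrow> (nat \<Rightarrow> nat) \<Rightarrow> nat \<Rightarrow> nat \<Rightarrow> 'v option" where
  "out_at A x \<sigma> i t = alg_out A i (fst (exec A x \<sigma> t) i)"

text \<open>Process i outputs y: y is the first output value it produces (outputs are irrevocable).\<close>
definition decides :: "('s, 'r, 'v) alg \<Rightarrow> (nat \<Rightarrow> 'v) \<Rightarrow> (nat \<Rightarrow> nat) \<Rightarrow> nat \<Rightarrow> 'v \<Rightarrow> bool" where
  "decides A x \<sigma> i y \<longleftrightarrow>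
     (\<exists>t. out_at A x \<sigma> i t = Some y \<and> (\<forall>t'<t. out_at A x \<sigma> i t' = None))"

text \<open>A process crashes in an (infinite) schedule iff it takes only finitely many steps.\<close>
definition crashed :: "(nat \<Rightarrow> nat) \<Rightarrow> nat \<Rightarrow> bool" where
  "crashed \<sigma> i \<longleftrightarrow> finite {t. \<sigma> t = i}"

definition admissible1 :: "nat \<Rightarrow> (nat \<Rightarrow> nat) \<Rightarrow> bool" where
  "admissible1 n \<sigma> \<longleftrightarrow> (\<forall>t. \<sigma> t < n) \<and> card {i. i < n \<and> crashed \<sigma> i} \<le> 1"

definition solves_GAA_1res :: "'v set \<Rightarrow> ('v \<Rightarrow> 'v \<Rightarrow> bool) \<Rightarrow> nat \<Rightarrow> ('s, 'r, 'v) alg \<Rightarrow> bool" where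
  "solves_GAA_1res V E n A \<longleftrightarrow>
    (\<forall>x \<sigma>. (\<forall>i<n. x i \<in> V) \<and> admissible1 n \<sigma> \<longrightarrow>
       (\<forall>i<n. \<not> crashed \<sigma> i \<longrightarrow> (\<exists>y. decides A x \<sigma> i y))
     \<and> (\<forall>i<n. \<forall>j<n. \<forall>yi yj. decides A x \<sigma> i yi \<and> decides A x \<sigma> j yj \<longrightarrow> yi = yj \<or> E yi yj)
     \<and> (\<forall>i<n. \<forall>y. decides A x \<sigma> i y \<longrightarrow>
           y \<in> V \<and> (\<exists>j<n. \<exists>k<n. on_shortest_path V E (x j) (x k) y)))"

end

theory Submission
  imports Defs
begin

(*
  Processes 0 and 1 run a two-process approximate agreement along a fixed shortest walk P
  between their inputs; everybody else waits until one of them has finished and adopts its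
  output.  In each of |V| rounds a worker writes its current vertex, scans, and moves to the
  midpoint (with respect to the positions in P) of its own vertex and the other worker's vertex
  of the same round, provided that one is already written.  Whichever worker scans later sees
  the other's value, so in every round at least one of them moves to the midpoint and the
  distance along P drops by at least one until it is at most 1; as P has at most |V| vertices,
  the final vertices are equal or adjacent, and they lie on P.  Since at most one process
  crashes, one of the two workers finishes, so every correct process decides.
*)

section \<open>Shortest walks\<close>

lemma walk_remove_cycle:
  assumes "walk V E p" "\<not> distinct p"
  obtains q where "walk V E q" "hd q = hd p" "last q = last p" "length q < length p"
proof -
  obtain xs ys zs y where p: "p = xs @ [y] @ ys @ [y] @ zs"
    using not_distinct_decomp[OF assms(2)] by blast
  let ?q = "xs @ [y] @ zs"
  have "successively E ((xs @ [y]) @ (ys @ [y] @ zs))"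
    "successively E ((xs @ [y] @ ys) @ ([y] @ zs))"
    using assms(1) unfolding walk_def p by simp_all
  then have "successively E (xs @ [y])" "successively E ([y] @ zs)"
    by (simp_all only: successively_append_iff)
  then have "successively E ?q"
    by (cases zs) (auto simp: successively_append_iff)
  moreover have "set ?q \<subseteq> V" using assms(1) unfolding walk_def p by auto
  moreover have "hd ?q = hd p" "last ?q = last p" unfolding p by (cases xs; cases zs; simp)+
  ultimately show ?thesis using that[of ?q] unfolding walk_def p by simp
qed

definition shortest_walk :: "'v set \<Rightarrow> ('v \<Rightarrow> 'v \<Rightarrow> bool) \<Rightarrow> 'v \<Rightarrow> 'v \<Rightarrow> 'v list" where
  "shortest_walk V E a b = (SOME p. walk V E p \<and> hd p = a \<and> last p = b
     \<and> length p = Suc (gdist V E a b) \<and> distinct p)"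

lemma shortest_walk:
  assumes "connected_graph V E" "a \<in> V" "b \<in> V"
  defines "p \<equiv> shortest_walk V E a b"
  shows "walk V E p" "hd p = a" "last p = b" "length p = Suc (gdist V E a b)" "distinct p"
proof -
  obtain p0 where "walk V E p0" "hd p0 = a" "last p0 = b"
    using assms unfolding connected_graph_def by blast
  then have "\<exists>k p. walk V E p \<and> hd p = a \<and> last p = b \<and> length p = Suc k"
    unfolding walk_def by (intro exI[of _ "length p0 - 1"] exI[of _ p0]) auto
  from LeastI_ex[OF this] obtain q where q: "walk V E q" "hd q = a" "last q = b"
    "length q = Suc (gdist V E a b)"
    unfolding gdist_def by blast
  have "distinct q"
  proof (rule ccontr)
    assume "\<not> distinct q"
    from walk_remove_cycle[OF q(1) this] obtain q' where
      q': "walk V E q'" "hd q' = a" "last q' = b" "length q' < length q"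
      unfolding q(2,3) .
    then obtain k where k: "length q' = Suc k" using walk_def by (cases q') auto
    then have "gdist V E a b \<le> k" unfolding gdist_def using q' by (intro Least_le) blast
    with k q q' show False by simp
  qed
  with q have "\<exists>p. walk V E p \<and> hd p = a \<and> last p = b \<and> length p = Suc (gdist V E a b) \<and> distinct p"
    by blast
  then have "walk V E p \<and> hd p = a \<and> last p = b \<and> length p = Suc (gdist V E a b) \<and> distinct p"
    unfolding p_def shortest_walk_def by (rule someI_ex)
  then show "walk V E p" "hd p = a" "last p = b" "length p = Suc (gdist V E a b)" "distinct p"
    by simp_all
qed

lemma on_shortest_path_shortest_walk:
  assumes "connected_graph V E" "a \<in> V" "b \<in> V" "w \<in> set (shortest_walk V E a b)"
  shows "on_shortest_path V E a b w"
  using shortest_walk[OF assms(1-3)] assms(4) unfolding on_shortest_path_def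
  by (intro exI[of _ "shortest_walk V E a b"]) simp

lemma length_distinct_walk_le:
  assumes "finite V" "walk V E p" "distinct p"
  shows "length p \<le> card V"
proof -
  have "length p = card (set p)" using assms(3) by (simp add: distinct_card)
  also have "\<dots> \<le> card V" using assms(1,2) unfolding walk_def by (simp add: card_mono)
  finally show ?thesis .
qed

section \<open>Midpoints along a path\<close>

definition position :: "'a list \<Rightarrow> 'a \<Rightarrow> nat" where
  "position p a = (LEAST k. p ! k = a)"

lemma position_nth:
  assumes "distinct p" "k < length p"
  shows "position p (p ! k) = k"
  unfolding position_def
proof (rule Least_equality)
  show "k \<le> j" if "p ! j = p ! k" for j
    using assms that by (cases "j < length p") (auto simp: nth_eq_iff_index_eq)
qed simp

lemma position_in_set:
  assumes "a \<in> set p"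
  shows "position p a < length p" "p ! position p a = a"
proof -
  obtain k where k: "k < length p" "p ! k = a" using assms by (auto simp: in_set_conv_nth)
  show "p ! position p a = a" unfolding position_def by (rule LeastI[of _ k]) (rule k(2))
  have "position p a \<le> k" unfolding position_def by (rule Least_le) (rule k(2))
  with k show "position p a < length p" by simp
qed

definition midpoint :: "'a list \<Rightarrow> 'a \<Rightarrow> 'a \<Rightarrow> 'a" where
  "midpoint p a b = p ! ((position p a + position p b) div 2)"

lemma midpoint_commute: "midpoint p a b = midpoint p b a"
  unfolding midpoint_def by (simp add: add.commute)

lemma midpoint_index_less:
  "a \<in> set p \<Longrightarrow> b \<in> set p \<Longrightarrow> (position p a + position p b) div 2 < length p"
  using position_in_set(1)[of a p] position_in_set(1)[of b p] by linarith

lemma midpoint_in_set: "a \<in> set p \<Longrightarrow> b \<in> set p \<Longrightarrow> midpoint p a b \<in> set p"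
  unfolding midpoint_def by (intro nth_mem midpoint_index_less)

lemma position_midpoint:
  "distinct p \<Longrightarrow> a \<in> set p \<Longrightarrow> b \<in> set p
    \<Longrightarrow> position p (midpoint p a b) = (position p a + position p b) div 2"
  unfolding midpoint_def by (intro position_nth midpoint_index_less)

lemma adjacent_if_positions_close:
  assumes "walk V E p" "distinct p" "\<And>u v. E u v \<Longrightarrow> E v u" "a \<in> set p" "b \<in> set p"
    and close: "\<bar>int (position p a) - int (position p b)\<bar> \<le> 1"
  shows "a = b \<or> E a b"
proof -
  have adj: "E (p ! k) (p ! Suc k)" if "Suc k < length p" for k
    using assms(1) that unfolding walk_def by (blast intro: successively_nth)
  note pa = position_in_set[OF assms(4)] and pb = position_in_set[OF assms(5)]
  from close consider "position p a = position p b" | "Suc (position p a) = position p b"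
    | "Suc (position p b) = position p a" by linarith
  then show ?thesis
  proof cases
    case 2
    with adj[of "position p a"] pa pb show ?thesis by simp
  next
    case 3
    with adj[of "position p b"] pa pb have "E b a" by simp
    then show ?thesis by (rule assms(3)[THEN disjI2])
  qed (use pa(2) pb(2) in metis)
qed

section \<open>Two-process midpoint runs\<close>

definition midpoint_run :: "'a list \<Rightarrow> 'a list \<Rightarrow> 'a list \<Rightarrow> bool" where
  "midpoint_run p a b \<longleftrightarrow>
     (\<forall>r. Suc r < length a \<longrightarrow>
        a ! Suc r = a ! r \<or> r < length b \<and> a ! Suc r = midpoint p (a ! r) (b ! r))
   \<and> (\<forall>r. Suc r < length b \<longrightarrow>
        b ! Suc r = b ! r \<or> r < length a \<and> b ! Suc r = midpoint p (a ! r) (b ! r))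
   \<and> (\<forall>r. Suc r < length a \<longrightarrow> Suc r < length b \<longrightarrow>
         a ! Suc r = midpoint p (a ! r) (b ! r) \<or> b ! Suc r = midpoint p (a ! r) (b ! r))"

lemma midpoint_run_commute: "midpoint_run p a b \<longleftrightarrow> midpoint_run p b a"
  unfolding midpoint_run_def by (auto simp: midpoint_commute)

lemma midpoint_run_singletons: "midpoint_run p [u] [v]"
  unfolding midpoint_run_def by simp

lemma midpoint_run_snoc:
  assumes run: "midpoint_run p a b" and "a \<noteq> []"
    and new: "v = last a \<and> length b \<le> length a
      \<or> length a \<le> length b \<and> v = midpoint p (last a) (b ! (length a - 1))"
  shows "midpoint_run p (a @ [v]) b"
proof -
  have last: "last a = a ! (length a - 1)" using \<open>a \<noteq> []\<close> by (simp add: last_conv_nth)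
  have old: "(a @ [v]) ! r = a ! r" if "r < length a" for r
    using that by (simp add: nth_append)
  have new_step: "(a @ [v]) ! Suc r = (a @ [v]) ! r
      \<or> r < length b \<and> (a @ [v]) ! Suc r = midpoint p ((a @ [v]) ! r) (b ! r)"
    "Suc r < length b \<longrightarrow> (a @ [v]) ! Suc r = midpoint p ((a @ [v]) ! r) (b ! r)"
    if "Suc r = length a" for r
    using new last by (auto simp: nth_append that[symmetric])
  note run = run[unfolded midpoint_run_def]
  show ?thesis
    unfolding midpoint_run_def
  proof (intro conjI allI impI)
    fix r assume "Suc r < length (a @ [v])"
    then consider "Suc r < length a" | "Suc r = length a" by fastforce
    then show "(a @ [v]) ! Suc r = (a @ [v]) ! r
      \<or> r < length b \<and> (a @ [v]) ! Suc r = midpoint p ((a @ [v]) ! r) (b ! r)"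
      by cases (use run old new_step(1) in auto)
  next
    fix r assume "Suc r < length b"
    then show "b ! Suc r = b ! r \<or> r < length (a @ [v]) \<and> b ! Suc r = midpoint p ((a @ [v]) ! r) (b ! r)"
      using run old by (cases "r < length a") auto
  next
    fix r assume "Suc r < length (a @ [v])" "Suc r < length b"
    then consider "Suc r < length a" | "Suc r = length a" by fastforce
    then show "(a @ [v]) ! Suc r = midpoint p ((a @ [v]) ! r) (b ! r)
      \<or> b ! Suc r = midpoint p ((a @ [v]) ! r) (b ! r)"
      by cases (use run old new_step(2) \<open>Suc r < length b\<close> in auto)
  qed
qed

lemma midpoint_step_distance:
  fixes i j i' j' :: nat
  assumes "i' = i \<or> i' = (i + j) div 2" "j' = j \<or> j' = (i + j) div 2"
    and "i' = (i + j) div 2 \<or> j' = (i + j) div 2"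
  shows "\<bar>int i' - int j'\<bar> \<le> 1 \<or> \<bar>int i' - int j'\<bar> < \<bar>int i - int j\<bar>"
proof -
  define m where "m = (i + j) div 2"
  have "int i + int j = 2 * int m \<or> int i + int j = 2 * int m + 1"
    unfolding m_def by linarith
  with assms show ?thesis
    unfolding m_def[symmetric] by (elim disjE) arith+
qed

lemma midpoint_run_converges:
  assumes p: "distinct p" "length p \<le> Suc K"
    and run: "midpoint_run p a b" "length a = Suc K" "length b = Suc K"
    and a: "set a \<subseteq> set p" "hd a = hd p"
    and b: "set b \<subseteq> set p" "hd b = last p"
  shows "\<bar>int (position p (last a)) - int (position p (last b))\<bar> \<le> 1"
proof -
  define d where "d r = \<bar>int (position p (a ! r)) - int (position p (b ! r))\<bar>" for r
  have in_p: "a ! r \<in> set p" "b ! r \<in> set p" if "r \<le> K" for r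
    using that run(2,3) a(1) b(1) by (auto intro!: subsetD[OF _ nth_mem])
  have "p \<noteq> []" using in_p(1)[of 0] by auto
  moreover have ne: "a \<noteq> []" "b \<noteq> []" using run(2,3) by auto
  then have "a ! 0 = hd p" "b ! 0 = last p"
    using a(2) b(2) by (simp_all add: hd_conv_nth[symmetric])
  ultimately have "position p (a ! 0) = 0" "position p (b ! 0) = length p - 1"
    using position_nth[OF p(1), of 0] position_nth[OF p(1), of "length p - 1"]
    by (simp_all add: hd_conv_nth last_conv_nth)
  then have d0: "d 0 \<le> int K" using p(2) unfolding d_def by simp
  have step: "d (Suc r) \<le> 1 \<or> d (Suc r) < d r" if "r < K" for r
  proof -
    let ?m = "midpoint p (a ! r) (b ! r)"
    have m: "position p ?m = (position p (a ! r) + position p (b ! r)) div 2"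
      using position_midpoint[OF p(1) in_p] that by simp
    have "a ! Suc r = a ! r \<or> a ! Suc r = ?m" "b ! Suc r = b ! r \<or> b ! Suc r = ?m"
      "a ! Suc r = ?m \<or> b ! Suc r = ?m"
      using run that unfolding midpoint_run_def by auto
    then have "position p (a ! Suc r) = position p (a ! r) \<or> position p (a ! Suc r) = position p ?m"
      "position p (b ! Suc r) = position p (b ! r) \<or> position p (b ! Suc r) = position p ?m"
      "position p (a ! Suc r) = position p ?m \<or> position p (b ! Suc r) = position p ?m"
      by auto
    from this[unfolded m] show ?thesis
      unfolding d_def by (rule midpoint_step_distance)
  qed
  have "d r \<le> max 1 (int K - int r)" if "r \<le> K" for r
    using that
  proof (induction r)
    case (Suc r)
    then show ?case using step[of r] by linarith
  qed (use d0 in simp)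
  from this[of K] show ?thesis
    using run(2,3) ne unfolding d_def by (simp add: last_conv_nth)
qed

lemma midpoint_run_either_order:
  "(k::nat) < 2 \<Longrightarrow> midpoint_run p (f k) (f (1 - k)) \<longleftrightarrow> midpoint_run p (f 0) (f 1)"
  by (auto simp: less_2_cases_iff midpoint_run_commute)

lemma step_other: "k \<noteq> i \<Longrightarrow> fst (step A k C) i = fst C i"
  by (cases C) (simp split: op.split)

lemma fst_step:
  "fst (step A k C) = (case alg_act A k (fst C k) of
     Update r s \<Rightarrow> (fst C)(k := s) | Scan f \<Rightarrow> (fst C)(k := f (snd C)))"
  by (cases C) (simp split: op.split)

lemma step_idle:
  assumes "alg_act A i (fst C i) = Scan (\<lambda>_. fst C i)"
  shows "fst (step A k C) i = fst C i"
proof (cases "k = i")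
  case True
  then show ?thesis using assms by (cases C) simp
qed (rule step_other)

lemma exec_idle_stable:
  assumes "alg_act A i s = Scan (\<lambda>_. s)" "fst (exec A x \<sigma> t) i = s" "t \<le> t'"
  shows "fst (exec A x \<sigma> t') i = s"
  using assms(3)
proof (induction t' rule: dec_induct)
  case (step t')
  then show ?case using assms(1) step_idle[of A i "exec A x \<sigma> t'"] by simp
qed (rule assms(2))

lemma decides_if_output:
  assumes "out_at A x \<sigma> i t = Some y"
  shows "\<exists>y'. decides A x \<sigma> i y'"
proof -
  define t0 where "t0 = (LEAST t. out_at A x \<sigma> i t \<noteq> None)"
  have "out_at A x \<sigma> i t0 \<noteq> None" unfolding t0_def by (rule LeastI[of _ t]) (simp add: assms)
  moreover have "\<forall>t'<t0. out_at A x \<sigma> i t' = None" unfolding t0_def using not_less_Least by blast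
  ultimately show ?thesis unfolding decides_def by blast
qed

lemma not_crashed_steps_after:
  assumes "\<not> crashed \<sigma> i"
  shows "\<exists>t'\<ge>t. \<sigma> t' = i"
proof (rule ccontr)
  assume "\<not> ?thesis"
  then have "{t. \<sigma> t = i} \<subseteq> {..<t}" by (auto simp: not_le)
  then have "finite {t. \<sigma> t = i}" by (rule finite_subset) simp
  then show False using assms unfolding crashed_def by simp
qed

lemma admissible1_survivor:
  assumes "admissible1 n \<sigma>" "2 \<le> n"
  shows "\<exists>j<2. \<not> crashed \<sigma> j"
proof (rule ccontr)
  assume "\<not> ?thesis"
  then have "{0, 1} \<subseteq> {i. i < n \<and> crashed \<sigma> i}" using assms(2) by auto
  then have "card {0::nat, 1} \<le> card {i. i < n \<and> crashed \<sigma> i}" by (rule card_mono[rotated]) simp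
  then show False using assms(1) unfolding admissible1_def by simp
qed

(* A worker (process 0 or 1) keeps the list of its round values; the flag 1 on the last entry
   marks a value that has not been written to its register yet. *)
definition pending :: "(nat \<times> 'v) list \<Rightarrow> bool" where
  "pending s \<longleftrightarrow> fst (last s) = 1"

definition commit :: "(nat \<times> 'v) list \<Rightarrow> (nat \<times> 'v) list" where
  "commit s = butlast s @ [(0, snd (last s))]"

definition register_of :: "(nat \<times> 'v) list \<Rightarrow> (nat \<times> 'v) list option" where
  "register_of s = (if pending s then (if butlast s = [] then None else Some (butlast s)) else Some s)"

definition finished :: "'v set \<Rightarrow> (nat \<times> 'v) list \<Rightarrow> bool" where
  "finished V s \<longleftrightarrow> length s = Suc (card V) \<and> \<not> pending s"

definition final_value :: "'v set \<Rightarrow> (nat \<times> 'v) list option \<Rightarrow> 'v option" where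
  "final_value V m = (case m of
     Some w \<Rightarrow> if finished V w then Some (snd (last w)) else None
   | None \<Rightarrow> None)"

definition copy_final :: "'v set \<Rightarrow> (nat \<Rightarrow> (nat \<times> 'v) list option) \<Rightarrow> (nat \<times> 'v) list" where
  "copy_final V M = (case final_value V (M 0) of
     Some v \<Rightarrow> [(0, v)]
   | None \<Rightarrow> (case final_value V (M 1) of Some v \<Rightarrow> [(0, v)] | None \<Rightarrow> []))"

(* The first entry of the other worker's register is its input, so both workers compute the
   same shortest walk. *)
definition next_value :: "'v set \<Rightarrow> ('v \<Rightarrow> 'v \<Rightarrow> bool) \<Rightarrow> nat \<Rightarrow> (nat \<times> 'v) list
    \<Rightarrow> (nat \<Rightarrow> (nat \<times> 'v) list option) \<Rightarrow> 'v" where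
  "next_value V E i s M = (case M (1 - i) of
     None \<Rightarrow> snd (last s)
   | Some w \<Rightarrow>
       if length s \<le> length w then
         midpoint (if i = 0 then shortest_walk V E (snd (hd s)) (snd (hd w))
                   else shortest_walk V E (snd (hd w)) (snd (hd s)))
           (snd (last s)) (snd (w ! (length s - 1)))
       else snd (last s))"

definition gaa_act :: "'v set \<Rightarrow> ('v \<Rightarrow> 'v \<Rightarrow> bool) \<Rightarrow> nat \<Rightarrow> (nat \<times> 'v) list
    \<Rightarrow> ((nat \<times> 'v) list, (nat \<times> 'v) list) op" where
  "gaa_act V E i s =
     (if i < 2 then
        (if pending s then Update (commit s) (commit s)
         else if finished V s then Scan (\<lambda>_. s)
         else Scan (\<lambda>M. s @ [(1, next_value V E i s M)]))
      else if s = [] then Scan (copy_final V) else Scan (\<lambda>_. s))"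

definition gaa_out :: "'v set \<Rightarrow> nat \<Rightarrow> (nat \<times> 'v) list \<Rightarrow> 'v option" where
  "gaa_out V i s =
     (if i < 2 then (if finished V s then Some (snd (last s)) else None)
      else if s = [] then None else Some (snd (hd s)))"

definition gaa_alg :: "'v set \<Rightarrow> ('v \<Rightarrow> 'v \<Rightarrow> bool) \<Rightarrow> ((nat \<times> 'v) list, (nat \<times> 'v) list, 'v) alg" where
  "gaa_alg V E = \<lparr>alg_init = (\<lambda>i v. if i < 2 then [(1, v)] else []),
     alg_act = gaa_act V E, alg_out = gaa_out V\<rparr>"

definition progress :: "(nat \<times> 'v) list \<Rightarrow> nat" where
  "progress s = 2 * length s - (if pending s then 1 else 0)"

lemma alg_act_gaa_alg: "alg_act (gaa_alg V E) = gaa_act V E"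
  by (simp add: gaa_alg_def)

lemma commit:
  assumes "s \<noteq> []"
  shows "commit s \<noteq> []" "\<not> pending (commit s)" "map snd (commit s) = map snd s"
    "register_of (commit s) = Some (commit s)"
proof -
  have "map snd (commit s) = map snd (butlast s @ [last s])"
    unfolding commit_def by simp
  then show "map snd (commit s) = map snd s" using assms by simp
qed (auto simp: commit_def pending_def register_of_def)

lemma register_of_Some:
  assumes "register_of s = Some w" "s \<noteq> []"
  shows "w \<noteq> []" "take (length w) s = w" "length s \<le> Suc (length w)"
  using assms unfolding register_of_def
  by (auto split: if_splits simp: butlast_conv_take min_def)

lemma register_of_None: "register_of s = None \<Longrightarrow> length s \<le> 1"
  unfolding register_of_def by (cases s rule: rev_cases) (auto split: if_splits)

lemma final_value_register_of:
  assumes "length s \<le> Suc (card V)"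
  shows "final_value V (register_of s) = (if finished V s then Some (snd (last s)) else None)"
  using assms unfolding final_value_def register_of_def finished_def by auto

definition copies_final :: "'v set \<Rightarrow> (nat \<Rightarrow> (nat \<times> 'v) list) \<Rightarrow> bool" where
  "copies_final V L \<longleftrightarrow>
     (\<forall>i\<ge>2. L i \<noteq> [] \<longrightarrow> (\<exists>j<2. finished V (L j) \<and> L i = [(0, snd (last (L j)))]))"

lemma copies_final_update_worker:
  "copies_final V L \<Longrightarrow> k < 2 \<Longrightarrow> \<not> finished V (L k) \<Longrightarrow> copies_final V (L(k := s))"
  unfolding copies_final_def by (metis fun_upd_apply not_le)

lemma copies_final_update_copier:
  assumes "copies_final V L" "2 \<le> k"
    and "s = [] \<or> (\<exists>j<2. finished V (L j) \<and> s = [(0, snd (last (L j)))])"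
  shows "copies_final V (L(k := s))"
  unfolding copies_final_def
proof (intro allI impI)
  fix i assume i: "2 \<le> i" "(L(k := s)) i \<noteq> []"
  have "\<exists>j<2. finished V (L j) \<and> (L(k := s)) i = [(0, snd (last (L j)))]"
    using assms i unfolding copies_final_def by (cases "i = k") auto
  moreover have "(L(k := s)) j = L j" if "j < 2" for j using that assms(2) by simp
  ultimately show "\<exists>j<2. finished V ((L(k := s)) j) \<and> (L(k := s)) i = [(0, snd (last ((L(k := s)) j)))]"
    by metis
qed

locale gaa_inputs =
  fixes V :: "'v set" and E :: "'v \<Rightarrow> 'v \<Rightarrow> bool" and x :: "nat \<Rightarrow> 'v"
  assumes graph: "finite_graph V E" and connected: "connected_graph V E"
    and inputs: "x 0 \<in> V" "x 1 \<in> V"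
begin

abbreviation input_path :: "'v list" where
  "input_path \<equiv> shortest_walk V E (x 0) (x 1)"

lemmas input_path = shortest_walk[OF connected inputs]

lemma E_sym: "E u v \<Longrightarrow> E v u"
  using graph unfolding finite_graph_def by blast

definition proc_inv :: "nat \<Rightarrow> (nat \<times> 'v) list \<Rightarrow> bool" where
  "proc_inv i s \<longleftrightarrow> s \<noteq> [] \<and> snd (hd s) = x i \<and> length s \<le> Suc (card V)
     \<and> set (map snd s) \<subseteq> set input_path"

definition gaa_inv :: "(nat \<Rightarrow> (nat \<times> 'v) list) \<Rightarrow> (nat \<Rightarrow> (nat \<times> 'v) list option) \<Rightarrow> bool" where
  "gaa_inv L M \<longleftrightarrow> (\<forall>i<2. proc_inv i (L i) \<and> M i = register_of (L i))
     \<and> midpoint_run input_path (map snd (L 0)) (map snd (L 1))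
     \<and> copies_final V L"

lemma gaa_inv_init: "gaa_inv (\<lambda>i. if i < 2 then [(1, x i)] else []) (\<lambda>_. None)"
proof -
  have "x 0 \<in> set input_path" "x 1 \<in> set input_path"
    using input_path(2,3) input_path(1)[unfolded walk_def] hd_in_set last_in_set by metis+
  then have "proc_inv i [(1, x i)]" if "i < 2" for i
    using that by (auto simp: proc_inv_def less_2_cases_iff)
  then show ?thesis
    unfolding gaa_inv_def copies_final_def
    by (simp add: register_of_def pending_def midpoint_run_singletons)
qed

lemma next_value:
  assumes k: "k < 2" and s: "proc_inv k s" and t: "proc_inv (1 - k) t"
    and M: "M (1 - k) = register_of t"
  defines "v \<equiv> next_value V E k s M"
  shows "v = snd (last s) \<and> length t \<le> length s
    \<or> length s \<le> length t \<and> v = midpoint input_path (snd (last s)) (snd (t ! (length s - 1)))"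
proof (cases "M (1 - k)")
  case None
  have "length t \<le> 1" using None M by (intro register_of_None) simp
  moreover have "1 \<le> length s" using s unfolding proc_inv_def by (cases s) auto
  moreover have "v = snd (last s)" using None unfolding v_def next_value_def by simp
  ultimately show ?thesis by simp
next
  case (Some w)
  have "t \<noteq> []" using t unfolding proc_inv_def by simp
  note w = register_of_Some[OF Some[unfolded M] this]
  have "hd w = hd t" using w(1) hd_take[of "length w" t] unfolding w(2) by simp
  then have hd: "snd (hd w) = x (1 - k)"
    using t unfolding proc_inv_def by simp
  have path: "(if k = 0 then shortest_walk V E (snd (hd s)) (snd (hd w))
      else shortest_walk V E (snd (hd w)) (snd (hd s))) = input_path"
    using k s hd unfolding proc_inv_def by (auto simp: less_2_cases_iff)
  show ?thesis
  proof (cases "length s \<le> length w")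
    case True
    have "length s - 1 < length w" using True s unfolding proc_inv_def by (cases s) auto
    then have "w ! (length s - 1) = t ! (length s - 1)"
      using nth_take[of "length s - 1" "length w" t] unfolding w(2) by simp
    then show ?thesis
      using True Some path length_take[of "length w" t] unfolding v_def next_value_def w(2) by auto
  next
    case False
    then show ?thesis using w(3) Some unfolding v_def next_value_def by auto
  qed
qed

lemma proc_inv_cong:
  assumes "map snd s = map snd s'"
  shows "proc_inv i s \<longleftrightarrow> proc_inv i s'"
proof -
  have "s = [] \<longleftrightarrow> s' = []" "length s = length s'"
    using assms map_is_Nil_conv length_map by metis+
  moreover have "s \<noteq> [] \<Longrightarrow> snd (hd s) = snd (hd s')"
    using assms hd_map calculation(1) by metis
  ultimately show ?thesis using assms unfolding proc_inv_def by auto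
qed

lemma proc_inv_last: "proc_inv i s \<Longrightarrow> snd (last s) \<in> set input_path"
  unfolding proc_inv_def using last_in_set by fastforce

lemma gaa_inv_commit:
  assumes inv: "gaa_inv L M" and k: "k < 2" and p: "pending (L k)"
  shows "gaa_inv (L(k := commit (L k))) (M(k := Some (commit (L k))))"
proof -
  let ?L = "L(k := commit (L k))"
  have "L k \<noteq> []" using inv k unfolding gaa_inv_def proc_inv_def by auto
  note c = commit[OF this]
  have vals: "map snd (?L i) = map snd (L i)" for i using c(3) by simp
  have "\<not> finished V (L k)" using p unfolding finished_def by simp
  then have "copies_final V ?L" using inv k copies_final_update_worker unfolding gaa_inv_def by blast
  then show ?thesis
    using inv c(4) proc_inv_cong[OF vals] unfolding gaa_inv_def vals by auto
qed

lemma next_value_on_path: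
  assumes "k < 2" "proc_inv k s" "proc_inv (1 - k) t" "M (1 - k) = register_of t"
  shows "next_value V E k s M \<in> set input_path"
proof -
  have "t ! (length s - 1) \<in> set t" if "length s \<le> length t"
    using that assms(2) unfolding proc_inv_def by (intro nth_mem) (cases s; simp)
  then have "length s \<le> length t \<Longrightarrow> snd (t ! (length s - 1)) \<in> set input_path"
    using assms(3) unfolding proc_inv_def by auto
  then show ?thesis
    using next_value[where M=M, OF assms] proc_inv_last[OF assms(2)] midpoint_in_set by metis
qed

lemma midpoint_run_next_value:
  assumes "k < 2" "proc_inv k s" "proc_inv (1 - k) t" "M (1 - k) = register_of t"
    and run: "midpoint_run input_path (map snd s) (map snd t)"
  shows "midpoint_run input_path (map snd s @ [next_value V E k s M]) (map snd t)"
  using run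
proof (rule midpoint_run_snoc)
  have ne: "s \<noteq> []" using assms(2) unfolding proc_inv_def by simp
  then have "map snd t ! (length s - 1) = snd (t ! (length s - 1))" if "length s \<le> length t"
    using that by (intro nth_map) (cases s; simp)
  with next_value[where M=M, OF assms(1-4)] ne
  show "next_value V E k s M = last (map snd s) \<and> length (map snd t) \<le> length (map snd s)
    \<or> length (map snd s) \<le> length (map snd t) \<and>
      next_value V E k s M = midpoint input_path (last (map snd s)) (map snd t ! (length (map snd s) - 1))"
    by (auto simp: last_map)
  show "map snd s \<noteq> []" using ne by simp
qed

lemma gaa_inv_scan:
  assumes inv: "gaa_inv L M" and k: "k < 2" and "\<not> pending (L k)" "\<not> finished V (L k)"
  defines "v \<equiv> next_value V E k (L k) M"
  shows "gaa_inv (L(k := L k @ [(1, v)])) M"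
proof -
  let ?L = "L(k := L k @ [(1, v)])"
  have s: "proc_inv k (L k)" and t: "proc_inv (1 - k) (L (1 - k))"
    and M: "M (1 - k) = register_of (L (1 - k))" "M k = register_of (L k)"
    using inv k unfolding gaa_inv_def by auto
  have "v \<in> set input_path"
    unfolding v_def using next_value_on_path[where M=M, OF k s t M(1)] .
  moreover have "length (L k) < Suc (card V)"
    using s assms(3,4) unfolding proc_inv_def finished_def by auto
  ultimately have "proc_inv k (?L k)" using s unfolding proc_inv_def by auto
  moreover have "M k = register_of (?L k)"
    using M(2) assms(3) s unfolding register_of_def pending_def proc_inv_def by simp
  ultimately have procs: "\<forall>i<2. proc_inv i (?L i) \<and> M i = register_of (?L i)"
    using inv unfolding gaa_inv_def by auto
  have "midpoint_run input_path (map snd (L k)) (map snd (L (1 - k)))"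
    using inv midpoint_run_either_order[OF k, of input_path "\<lambda>i. map snd (L i)"]
    unfolding gaa_inv_def by simp
  from midpoint_run_next_value[where M=M, OF k s t M(1) this, folded v_def]
  have "midpoint_run input_path (map snd (?L k)) (map snd (?L (1 - k)))"
    using k by (auto simp: less_2_cases_iff)
  then have "midpoint_run input_path (map snd (?L 0)) (map snd (?L 1))"
    using midpoint_run_either_order[OF k, of input_path "\<lambda>i. map snd (?L i)"] by blast
  moreover have "copies_final V ?L"
    using inv k assms(4) copies_final_update_worker unfolding gaa_inv_def by blast
  ultimately show ?thesis using procs unfolding gaa_inv_def by blast
qed

lemma copy_final:
  assumes "gaa_inv L M"
  shows "copy_final V M = (if finished V (L 0) then [(0, snd (last (L 0)))]
    else if finished V (L 1) then [(0, snd (last (L 1)))] else [])"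
proof -
  have "final_value V (M j) = (if finished V (L j) then Some (snd (last (L j))) else None)"
    if "j < 2" for j
    using assms that final_value_register_of unfolding gaa_inv_def proc_inv_def by metis
  then show ?thesis unfolding copy_final_def by simp
qed

lemma gaa_inv_copy:
  assumes "gaa_inv L M" "2 \<le> k"
  shows "gaa_inv (L(k := copy_final V M)) M"
proof -
  have "copies_final V (L(k := copy_final V M))"
  proof (rule copies_final_update_copier)
    show "copies_final V L" using assms(1) unfolding gaa_inv_def by simp
    show "copy_final V M = []
      \<or> (\<exists>j<2. finished V (L j) \<and> copy_final V M = [(0, snd (last (L j)))])"
      unfolding copy_final[OF assms(1)] by (auto intro: exI[of _ 0] exI[of _ 1])
  qed (rule assms(2))
  then show ?thesis using assms unfolding gaa_inv_def by auto
qed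

lemma gaa_inv_step:
  assumes "gaa_inv L M"
  shows "gaa_inv (fst (step (gaa_alg V E) k (L, M))) (snd (step (gaa_alg V E) k (L, M)))"
proof (cases "k < 2")
  case True
  consider "pending (L k)" | "\<not> pending (L k)" "finished V (L k)"
    | "\<not> pending (L k)" "\<not> finished V (L k)" by blast
  then show ?thesis
    by cases (use assms True gaa_inv_commit gaa_inv_scan in \<open>simp_all add: gaa_alg_def gaa_act_def\<close>)
next
  case False
  then show ?thesis
    using assms gaa_inv_copy by (cases "L k = []") (simp_all add: gaa_alg_def gaa_act_def)
qed

abbreviation states :: "(nat \<Rightarrow> nat) \<Rightarrow> nat \<Rightarrow> nat \<Rightarrow> (nat \<times> 'v) list" where
  "states \<sigma> t \<equiv> fst (exec (gaa_alg V E) x \<sigma> t)"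

abbreviation memory :: "(nat \<Rightarrow> nat) \<Rightarrow> nat \<Rightarrow> nat \<Rightarrow> (nat \<times> 'v) list option" where
  "memory \<sigma> t \<equiv> snd (exec (gaa_alg V E) x \<sigma> t)"

lemma gaa_inv_exec: "gaa_inv (states \<sigma> t) (memory \<sigma> t)"
proof (induction t)
  case 0
  then show ?case using gaa_inv_init by (simp add: gaa_alg_def)
next
  case (Suc t)
  then show ?case using gaa_inv_step[of "states \<sigma> t" "memory \<sigma> t" "\<sigma> t"] by simp
qed

lemma finished_stable:
  assumes "j < 2" "finished V (states \<sigma> t j)" "t \<le> t'"
  shows "states \<sigma> t' j = states \<sigma> t j"
proof -
  have "alg_act (gaa_alg V E) j (states \<sigma> t j) = Scan (\<lambda>_. states \<sigma> t j)"
    using assms(1,2) unfolding gaa_alg_def gaa_act_def finished_def by simp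
  from exec_idle_stable[OF this refl assms(3)] show ?thesis .
qed

lemma progress_step:
  assumes "gaa_inv L M" "k < 2" "\<not> finished V (L k)"
  shows "progress (fst (step (gaa_alg V E) k (L, M)) k) = Suc (progress (L k))"
proof -
  have "L k \<noteq> []" "length (L k) \<le> Suc (card V)"
    using assms(1,2) unfolding gaa_inv_def proc_inv_def by auto
  then show ?thesis
    using assms(2,3) commit[of "L k"]
    by (auto simp: gaa_alg_def gaa_act_def progress_def finished_def pending_def commit_def)
qed

lemma worker_finishes:
  assumes "k < 2" "\<not> crashed \<sigma> k"
  shows "\<exists>t. finished V (states \<sigma> t k)"
proof (rule ccontr)
  assume never: "\<not> ?thesis"
  define m where "m t = progress (states \<sigma> t k)" for t
  have own_step: "m (Suc t) = Suc (m t)" if "\<sigma> t = k" for t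
    using progress_step[OF gaa_inv_exec assms(1)] never that unfolding m_def by auto
  have other_step: "m (Suc t) = m t" if "\<sigma> t \<noteq> k" for t
    unfolding m_def exec.simps(2) step_other[OF that] ..
  have "m t \<le> m (Suc t)" for t
    using own_step[of t] other_step[of t] by (cases "\<sigma> t = k") auto
  then have mono: "t \<le> t' \<Longrightarrow> m t \<le> m t'" for t t' by (rule lift_Suc_mono_le)
  have "\<exists>t. K \<le> m t" for K
  proof (induction K)
    case (Suc K)
    then obtain t where "K \<le> m t" by blast
    moreover obtain t' where "t' \<ge> t" "\<sigma> t' = k" using not_crashed_steps_after[OF assms(2)] by blast
    ultimately have "Suc K \<le> m (Suc t')" using own_step mono by (metis Suc_le_mono le_trans)
    then show ?case by blast
  qed simp
  then obtain t where "Suc (2 * Suc (card V)) \<le> m t" by blast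
  moreover have "proc_inv k (states \<sigma> t k)" using gaa_inv_exec assms(1) unfolding gaa_inv_def by blast
  then have "m t \<le> 2 * Suc (card V)" unfolding m_def proc_inv_def progress_def by auto
  ultimately show False by simp
qed

lemma finished_values_adjacent:
  assumes inv: "gaa_inv L M" and fin: "finished V (L 0)" "finished V (L 1)"
  shows "snd (last (L 0)) = snd (last (L 1)) \<or> E (snd (last (L 0))) (snd (last (L 1)))"
proof -
  have proc: "proc_inv 0 (L 0)" "proc_inv 1 (L 1)"
    and run: "midpoint_run input_path (map snd (L 0)) (map snd (L 1))"
    using inv unfolding gaa_inv_def by auto
  have ne: "L 0 \<noteq> []" "L 1 \<noteq> []" using proc unfolding proc_inv_def by auto
  have "length input_path \<le> Suc (card V)"
    using length_distinct_walk_le[OF _ input_path(1,5)] graph unfolding finite_graph_def by simp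
  then have "\<bar>int (position input_path (last (map snd (L 0))))
      - int (position input_path (last (map snd (L 1))))\<bar> \<le> 1"
    using fin proc ne input_path(2,3)
    by (intro midpoint_run_converges[OF input_path(5) _ run])
      (auto simp: finished_def proc_inv_def hd_map)
  then have close: "\<bar>int (position input_path (snd (last (L 0))))
      - int (position input_path (snd (last (L 1))))\<bar> \<le> 1"
    using ne by (simp add: last_map)
  have "snd (last (L j)) \<in> set input_path" if "j < 2" for j
    using inv that proc_inv_last unfolding gaa_inv_def by blast
  then show ?thesis
    using adjacent_if_positions_close[OF input_path(1,5) E_sym _ _ close] by simp
qed

lemma last_value_valid:
  assumes "gaa_inv L M" "j < 2"
  shows "snd (last (L j)) \<in> V \<and> on_shortest_path V E (x 0) (x 1) (snd (last (L j)))"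
proof -
  have "snd (last (L j)) \<in> set input_path"
    using assms proc_inv_last unfolding gaa_inv_def by blast
  then show ?thesis
    using on_shortest_path_shortest_walk[OF connected inputs] input_path(1)
    unfolding walk_def by auto
qed

lemma out_at_gaa_alg: "out_at (gaa_alg V E) x \<sigma> i t = gaa_out V i (states \<sigma> t i)"
  by (simp add: out_at_def gaa_alg_def)

lemma output_value:
  assumes "out_at (gaa_alg V E) x \<sigma> i t = Some y"
  shows "\<exists>j<2. finished V (states \<sigma> t j) \<and> y = snd (last (states \<sigma> t j))"
proof (cases "i < 2")
  case True
  then have "finished V (states \<sigma> t i)" "y = snd (last (states \<sigma> t i))"
    using assms unfolding out_at_gaa_alg gaa_out_def by (simp_all split: if_splits)
  with True show ?thesis by blast
next
  case False
  then have "states \<sigma> t i \<noteq> []" "y = snd (hd (states \<sigma> t i))"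
    using assms unfolding out_at_gaa_alg gaa_out_def by (simp_all split: if_splits)
  moreover have "copies_final V (states \<sigma> t)"
    using gaa_inv_exec unfolding gaa_inv_def by blast
  ultimately obtain j where "j < 2" "finished V (states \<sigma> t j)"
    "states \<sigma> t i = [(0, snd (last (states \<sigma> t j)))]"
    using False unfolding copies_final_def by (meson not_less)
  then show ?thesis using \<open>y = snd (hd (states \<sigma> t i))\<close> by auto
qed

lemma gaa_agreement:
  assumes "decides (gaa_alg V E) x \<sigma> i y" "decides (gaa_alg V E) x \<sigma> i' y'"
  shows "y = y' \<or> E y y'"
proof -
  obtain t t' where "out_at (gaa_alg V E) x \<sigma> i t = Some y" "out_at (gaa_alg V E) x \<sigma> i' t' = Some y'"
    using assms unfolding decides_def by blast
  then obtain j j' where j: "j < 2" "finished V (states \<sigma> t j)" "y = snd (last (states \<sigma> t j))"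
    and j': "j' < 2" "finished V (states \<sigma> t' j')" "y' = snd (last (states \<sigma> t' j'))"
    using output_value by metis
  define T where "T = max t t'"
  have "states \<sigma> T j = states \<sigma> t j" "states \<sigma> T j' = states \<sigma> t' j'"
    using finished_stable[OF j(1,2), of T] finished_stable[OF j'(1,2), of T] unfolding T_def by simp_all
  with j j' have y: "finished V (states \<sigma> T j)" "y = snd (last (states \<sigma> T j))"
    and y': "finished V (states \<sigma> T j')" "y' = snd (last (states \<sigma> T j'))" by simp_all
  show ?thesis
  proof (cases "j = j'")
    case False
    then consider "j = 0" "j' = 1" | "j = 1" "j' = 0" using j(1) j'(1) by linarith
    then show ?thesis
      using finished_values_adjacent[OF gaa_inv_exec] y y' by cases (simp, metis E_sym)
  qed (use y y' in simp)
qed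

lemma gaa_validity:
  assumes "decides (gaa_alg V E) x \<sigma> i y"
  shows "y \<in> V \<and> on_shortest_path V E (x 0) (x 1) y"
  using assms output_value last_value_valid[OF gaa_inv_exec] unfolding decides_def by metis

lemma gaa_termination:
  assumes "admissible1 n \<sigma>" "2 \<le> n" "\<not> crashed \<sigma> i"
  shows "\<exists>y. decides (gaa_alg V E) x \<sigma> i y"
proof (cases "i < 2")
  case True
  then obtain t where "finished V (states \<sigma> t i)" using worker_finishes assms(3) by blast
  then have "out_at (gaa_alg V E) x \<sigma> i t = Some (snd (last (states \<sigma> t i)))"
    using True by (simp add: out_at_gaa_alg gaa_out_def)
  then show ?thesis by (rule decides_if_output)
next
  case False
  obtain j t0 where j: "j < 2" "finished V (states \<sigma> t0 j)"
    using admissible1_survivor[OF assms(1,2)] worker_finishes by blast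
  obtain t where t: "t \<ge> t0" "\<sigma> t = i" using not_crashed_steps_after[OF assms(3)] by blast
  have "finished V (states \<sigma> t j)" using finished_stable[OF j t(1)] j(2) by simp
  then have "copy_final V (memory \<sigma> t) \<noteq> []"
    using j(1) copy_final[OF gaa_inv_exec] by (auto simp: less_2_cases_iff)
  moreover have "states \<sigma> (Suc t) i
      = (if states \<sigma> t i = [] then copy_final V (memory \<sigma> t) else states \<sigma> t i)"
    using False unfolding exec.simps(2) fst_step t(2) by (simp add: alg_act_gaa_alg gaa_act_def)
  ultimately have "states \<sigma> (Suc t) i \<noteq> []" by simp
  then have "out_at (gaa_alg V E) x \<sigma> i (Suc t) = Some (snd (hd (states \<sigma> (Suc t) i)))"
    using False by (simp add: out_at_gaa_alg gaa_out_def)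
  then show ?thesis by (rule decides_if_output)
qed

end

lemma gaa_alg_solves:
  assumes "finite_graph V E" "connected_graph V E" "2 \<le> n"
  shows "solves_GAA_1res V E n (gaa_alg V E)"
  unfolding solves_GAA_1res_def
proof (rule allI, rule allI, rule impI, intro conjI)
  fix x \<sigma> assume run: "(\<forall>i<n. x i \<in> V) \<and> admissible1 n \<sigma>"
  then interpret gaa_inputs V E x using assms by unfold_locales auto
  show "\<forall>i<n. \<not> crashed \<sigma> i \<longrightarrow> (\<exists>y. decides (gaa_alg V E) x \<sigma> i y)"
    using gaa_termination run assms(3) by blast
  show "\<forall>i<n. \<forall>j<n. \<forall>yi yj. decides (gaa_alg V E) x \<sigma> i yi \<and> decides (gaa_alg V E) x \<sigma> j yj
      \<longrightarrow> yi = yj \<or> E yi yj"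
    using gaa_agreement by blast
  have "0 < n" "1 < n" using assms(3) by simp_all
  then show "\<forall>i<n. \<forall>y. decides (gaa_alg V E) x \<sigma> i y
      \<longrightarrow> y \<in> V \<and> (\<exists>j<n. \<exists>k<n. on_shortest_path V E (x j) (x k) y)"
    using gaa_validity by blast
qed

theorem mainTheorem6:
  fixes V :: "'v set" and E :: "'v \<Rightarrow> 'v \<Rightarrow> bool" and n :: nat
  assumes "finite_graph V E" and "connected_graph V E" and "n \<ge> 2"
  shows "\<exists>A :: ((nat \<times> 'v) list, (nat \<times> 'v) list, 'v) alg. solves_GAA_1res V E n A"
  using gaa_alg_solves[OF assms] by blast

end
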